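(* Let $N\ge 2$, $K\ge 2$ be integers, $d_m=N-1$ for $m\in[1:N]$ and $d_m=N$ for $m\in[N+1:N^K]$, $C=\left(\sum_{k=0}^{K-1}N^{-k}\right)^{-1}$, and $1\le D\le 1/C$. Let $\mathcal{F}_D$ be the set of probability vectors $P$ on $[1:N^K]$ with $\frac{1}{N-1}\sum_{m=1}^{N^K}p_md_m=D$, and $U$ the uniform distribution on $[1:N^K]$. Then the minimum $\rho_\alpha:=\min_{P\in\mathcal{F}_D}D_\alpha(P\|U)$ equals, for $0<\alpha<\infty$, $\alpha\ne1$, $$\rho_\alpha=\frac{1}{\alpha-1}\log\left[N\left(\frac{1-(N-1)(D-1)}{N}\right)^{\alpha}+(N^K-N)\left(\frac{(N-1)(D-1)}{N^K-N}\right)^{\alpha}\right]+\log N^K;$$ for $\alpha=1$, $$\rho_1=\{1-(N-1)(D-1)\}\log\frac{1-(N-1)(D-1)}{N}+(N-1)(D-1)\log\frac{(N-1)(D-1)}{N^K-N}+\log N^K;$$ and for $\alpha=\infty$, $$\rho_\infty=\log\frac{1-(N-1)(D-1)}{N}+\log N^K.$$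
   Context: Notation: $[i:j]=\{i,\dots,j\}$; logarithms are natural, with $0\log0=0$. Rényi divergence for probability vectors $P,U$ on $[1:M]$ with $u_m>0$: $D_\alpha(P\|U)=\frac{1}{\alpha-1}\log\sum_m p_m^\alpha u_m^{1-\alpha}$ for $0<\alpha<\infty,\alpha\ne1$; $D_1(P\|U)=\sum_m p_m\log\frac{p_m}{u_m}$; $D_\infty(P\|U)=\log\max_m\frac{p_m}{u_m}$. (Interpretation: optimal tradeoff between information leakage and normalized expected download cost $D$ for the symmetric Tian–Sun–Chen PIR scheme with $N$ databases, $K$ messages, message length $N-1$.) *)

theory Defs
  imports Complex_Main
begin

(* Probability vectors on [1:M], represented as functions nat => real
   (values outside {1..M} are irrelevant). *)
definition prob_vec :: "nat \<Rightarrow> (nat \<Rightarrow> real) \<Rightarrow> bool" where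
  "prob_vec M P \<longleftrightarrow> (\<forall>m\<in>{1..M}. 0 \<le> P m) \<and> (\<Sum>m=1..M. P m) = 1"

definition renyi_div :: "real \<Rightarrow> nat \<Rightarrow> (nat \<Rightarrow> real) \<Rightarrow> (nat \<Rightarrow> real) \<Rightarrow> real" where
  "renyi_div \<alpha> M P U =
     1 / (\<alpha> - 1) * ln (\<Sum>m=1..M. P m powr \<alpha> * U m powr (1 - \<alpha>))"

(* order 1 (KL divergence); note 0 * ln 0 = 0 in Isabelle, matching 0 log 0 = 0 *)
definition renyi_div_1 :: "nat \<Rightarrow> (nat \<Rightarrow> real) \<Rightarrow> (nat \<Rightarrow> real) \<Rightarrow> real" where
  "renyi_div_1 M P U = (\<Sum>m=1..M. P m * ln (P m / U m))"

definition renyi_div_inf :: "nat \<Rightarrow> (nat \<Rightarrow> real) \<Rightarrow> (nat \<Rightarrow> real) \<Rightarrow> real" where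
  "renyi_div_inf M P U = ln (Max ((\<lambda>m. P m / U m) ` {1..M}))"

definition dcost :: "nat \<Rightarrow> nat \<Rightarrow> real" where
  "dcost N m = (if m \<le> N then real N - 1 else real N)"

definition feasible :: "nat \<Rightarrow> nat \<Rightarrow> real \<Rightarrow> (nat \<Rightarrow> real) set" where
  "feasible N K D = {P. prob_vec (N ^ K) P \<and>
      1 / (real N - 1) * (\<Sum>m=1..N^K. P m * dcost N m) = D}"

definition uniform :: "nat \<Rightarrow> nat \<Rightarrow> real" where
  "uniform M m = 1 / real M"

definition is_minimum :: "real set \<Rightarrow> real \<Rightarrow> bool" where
  "is_minimum S x \<longleftrightarrow> x \<in> S \<and> (\<forall>y\<in>S. x \<le> y)"

end

theory Submission
  imports Defs "HOL-Analysis.Convex"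
begin

(* The cost constraint only fixes the mass a = 1 - (N-1)(D-1) that P puts on the N cheaper
   messages, the rest 1 - a being spread over the other N^K - N.  Against the uniform reference
   each divergence is a monotone function of a sum of a convex function of the p_m (or of their
   maximum), so by Jensen's inequality within each of the two blocks it is minimised by the vector
   that is uniform on both blocks.  For the maximum this needs the head value a/N to dominate,
   i.e. a >= N / N^K, which by the geometric sum is exactly the hypothesis D <= 1/C. *)

lemma powr_ge_tangent:
  fixes c y \<alpha> :: real
  assumes "1 < \<alpha>" "0 < c" "0 \<le> y"
  shows "c powr \<alpha> + \<alpha> * c powr (\<alpha> - 1) * (y - c) \<le> y powr \<alpha>"
proof -
  let ?q = "\<alpha> / (\<alpha> - 1)"
  have "y * c powr (\<alpha> - 1) \<le> y powr \<alpha> / \<alpha> + (c powr (\<alpha> - 1)) powr ?q / ?q"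
    using assms by (intro Youngs_inequality) (auto simp: field_simps)
  also have "(c powr (\<alpha> - 1)) powr ?q = c powr \<alpha>"
    using assms by (simp add: powr_powr)
  finally have "\<alpha> * (y * c powr (\<alpha> - 1)) \<le> y powr \<alpha> + (\<alpha> - 1) * c powr \<alpha>"
    using assms by (simp add: field_simps)
  moreover have "c powr (\<alpha> - 1) * c = c powr \<alpha>"
    using assms by (simp add: powr_diff)
  ultimately show ?thesis by (simp add: algebra_simps)
qed

lemma powr_le_tangent:
  fixes c y \<alpha> :: real
  assumes "0 < \<alpha>" "\<alpha> < 1" "0 < c" "0 \<le> y"
  shows "y powr \<alpha> \<le> c powr \<alpha> + \<alpha> * c powr (\<alpha> - 1) * (y - c)"
proof (cases "y = 0")
  case True
  have "c powr (\<alpha> - 1) * c = c powr \<alpha>"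
    using assms by (simp add: powr_diff)
  then show ?thesis using True assms by (simp add: algebra_simps)
next
  case False
  then have "y powr \<alpha> * c powr (1 - \<alpha>) \<le> \<alpha> * y + (1 - \<alpha>) * c"
    using assms by (intro Youngs_inequality_0) auto
  then have "c powr (\<alpha> - 1) * (y powr \<alpha> * c powr (1 - \<alpha>)) \<le> c powr (\<alpha> - 1) * (\<alpha> * y + (1 - \<alpha>) * c)"
    by (intro mult_left_mono) auto
  moreover have "c powr (\<alpha> - 1) * c powr (1 - \<alpha>) = 1" "c powr (\<alpha> - 1) * c = c powr \<alpha>"
    using assms by (simp_all add: powr_diff flip: powr_add)
  ultimately show ?thesis by (simp add: algebra_simps)
qed

lemma xlnx_ge_tangent:
  fixes c y :: real
  assumes "0 < c" "0 \<le> y"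
  shows "c * ln c + (ln c + 1) * (y - c) \<le> y * ln y"
proof (cases "y = 0")
  case True
  then show ?thesis using assms by simp
next
  case False
  then have "1 - c / y \<le> ln (y / c)"
    using ln_le_minus_one[of "c / y"] assms by (simp add: ln_div)
  then have "y * (1 - c / y) \<le> y * ln (y / c)"
    using assms by (intro mult_left_mono) auto
  moreover have "y * (1 - c / y) = y - c" "y * ln (y / c) = y * ln y - y * ln c"
    using assms False by (simp_all add: ln_div field_simps)
  ultimately show ?thesis by (simp add: algebra_simps)
qed

text \<open>Supporting lines are only required at positive points, since the mean is positive unless all
  \<open>x i\<close> vanish; at \<open>0\<close> the functions \<open>- y powr \<alpha>\<close> (\<open>\<alpha> < 1\<close>) and \<open>y * ln y\<close> have none.\<close>
lemma card_mul_mean_le_sum: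
  fixes f :: "real \<Rightarrow> real" and x :: "'a \<Rightarrow> real"
  assumes "finite G" "G \<noteq> {}" "\<And>i. i \<in> G \<Longrightarrow> 0 \<le> x i"
    and support: "\<And>c. 0 < c \<Longrightarrow> \<exists>g. \<forall>y\<ge>0. f c + g * (y - c) \<le> f y"
  shows "card G * f (sum x G / card G) \<le> (\<Sum>i\<in>G. f (x i))"
proof (cases "sum x G = 0")
  case True
  then have "\<forall>i\<in>G. x i = 0"
    using assms sum_nonneg_eq_0_iff by blast
  then show ?thesis using True by simp
next
  case False
  define c where "c = sum x G / card G"
  have "0 < c"
    using False assms by (simp add: c_def card_gt_0_iff order.not_eq_order_implies_strict sum_nonneg)
  then obtain g where g: "\<And>y. 0 \<le> y \<Longrightarrow> f c + g * (y - c) \<le> f y"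
    using support by blast
  have "(\<Sum>i\<in>G. g * (x i - c)) = g * (sum x G - card G * c)"
    by (simp add: sum_distrib_left[symmetric] sum_subtractf)
  also have "\<dots> = 0"
    using assms by (simp add: c_def)
  finally have "card G * f c = (\<Sum>i\<in>G. f c + g * (x i - c))"
    by (simp add: sum.distrib)
  also have "\<dots> \<le> (\<Sum>i\<in>G. f (x i))"
    using assms g by (intro sum_mono) auto
  finally show ?thesis by (simp add: c_def)
qed

lemma sum_atLeastAtMost_split_head:
  fixes f :: "nat \<Rightarrow> 'a::comm_monoid_add"
  assumes "N \<le> M"
  shows "(\<Sum>m=1..M. f m) = (\<Sum>m=1..N. f m) + (\<Sum>m=Suc N..M. f m)"
  using sum.ub_add_nat[of 1 N f "M - N"] assms by simp

definition head_mass_vecs :: "nat \<Rightarrow> nat \<Rightarrow> real \<Rightarrow> (nat \<Rightarrow> real) set" where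
  "head_mass_vecs M N a = {P. prob_vec M P \<and> (\<Sum>m=1..N. P m) = a}"

definition block_uniform :: "nat \<Rightarrow> nat \<Rightarrow> real \<Rightarrow> nat \<Rightarrow> real" where
  "block_uniform M N a m = (if m \<le> N then a / N else (1 - a) / (real M - real N))"

lemma sum_block_uniform:
  assumes "N \<le> M"
  shows "(\<Sum>m=1..M. f (block_uniform M N a m))
    = N * f (a / N) + (real M - real N) * f ((1 - a) / (real M - real N))"
proof -
  have "(\<Sum>m=1..N. f (block_uniform M N a m)) = (\<Sum>m=1..N. f (a / N))"
    by (rule sum.cong) (auto simp: block_uniform_def)
  moreover have "(\<Sum>m=Suc N..M. f (block_uniform M N a m))
      = (\<Sum>m=Suc N..M. f ((1 - a) / (real M - real N)))"
    by (rule sum.cong) (auto simp: block_uniform_def)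
  moreover have "card {Suc N..M} = M - N"
    by simp
  ultimately show ?thesis
    using sum_atLeastAtMost_split_head[OF assms, of "\<lambda>m. f (block_uniform M N a m)"] assms
    by simp
qed

lemma block_uniform_in_head_mass_vecs:
  assumes "0 < N" "N < M" "0 \<le> a" "a \<le> 1"
  shows "block_uniform M N a \<in> head_mass_vecs M N a"
proof -
  have "(\<Sum>m=1..N. block_uniform M N a m) = a"
    using assms by (simp add: block_uniform_def)
  moreover have "(\<Sum>m=1..M. block_uniform M N a m) = 1"
    using sum_block_uniform[of N M "\<lambda>y. y"] assms by simp
  moreover have "0 \<le> block_uniform M N a m" for m
    using assms by (simp add: block_uniform_def)
  ultimately show ?thesis
    by (simp add: head_mass_vecs_def prob_vec_def)
qed

lemma sum_block_uniform_le:
  assumes "0 < N" "N < M" "P \<in> head_mass_vecs M N a"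
    and support: "\<And>c. 0 < c \<Longrightarrow> \<exists>g. \<forall>y\<ge>0. f c + g * (y - c) \<le> f y"
  shows "(\<Sum>m=1..M. f (block_uniform M N a m)) \<le> (\<Sum>m=1..M. f (P m))"
proof -
  have nonneg: "\<And>m. m \<in> {1..M} \<Longrightarrow> 0 \<le> P m" and total: "(\<Sum>m=1..M. P m) = 1"
    and head: "(\<Sum>m=1..N. P m) = a"
    using assms(3) by (auto simp: head_mass_vecs_def prob_vec_def)
  have tail: "(\<Sum>m=Suc N..M. P m) = 1 - a"
    using total head sum_atLeastAtMost_split_head[of N M P] assms by simp
  have "N * f (a / N) \<le> (\<Sum>m=1..N. f (P m))"
    using card_mul_mean_le_sum[of "{1..N}" P f] nonneg head support assms by auto
  moreover have "(real M - real N) * f ((1 - a) / (real M - real N)) \<le> (\<Sum>m=Suc N..M. f (P m))"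
    using card_mul_mean_le_sum[of "{Suc N..M}" P f] nonneg tail support assms by auto
  ultimately show ?thesis
    using sum_block_uniform[of N M f a] sum_atLeastAtMost_split_head[of N M "\<lambda>m. f (P m)"] assms
    by simp
qed

lemma is_minimum_sum_block_uniform:
  assumes "0 < N" "N < M" "0 \<le> a" "a \<le> 1"
    and support: "\<And>c. 0 < c \<Longrightarrow> \<exists>g. \<forall>y\<ge>0. f c + g * (y - c) \<le> f y"
  shows "is_minimum ((\<lambda>P. \<Sum>m=1..M. f (P m)) ` head_mass_vecs M N a)
    (N * f (a / N) + (real M - real N) * f ((1 - a) / (real M - real N)))"
proof -
  have "(\<Sum>m=1..M. f (block_uniform M N a m)) \<le> (\<Sum>m=1..M. f (P m))"
    if "P \<in> head_mass_vecs M N a" for P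
    using sum_block_uniform_le[OF assms(1,2) that support] .
  then show ?thesis
    using block_uniform_in_head_mass_vecs[OF assms(1-4)] sum_block_uniform[of N M f a] assms
    unfolding is_minimum_def by (auto intro!: rev_image_eqI)
qed

lemma is_minimum_image_mono:
  assumes "is_minimum (g ` S) x"
    and "\<And>P. P \<in> S \<Longrightarrow> \<phi> P = h (g P)"
    and "\<And>P Q. P \<in> S \<Longrightarrow> Q \<in> S \<Longrightarrow> g P \<le> g Q \<Longrightarrow> h (g P) \<le> h (g Q)"
  shows "is_minimum (\<phi> ` S) (h x)"
proof -
  obtain P0 where "P0 \<in> S" "x = g P0" "\<forall>Q\<in>S. g P0 \<le> g Q"
    using assms(1) unfolding is_minimum_def by auto
  then show ?thesis
    using assms(2,3) unfolding is_minimum_def by (auto intro!: rev_image_eqI[of P0])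
qed

lemma prob_vec_sum_powr_pos:
  assumes "prob_vec M P" "0 < \<alpha>"
  shows "0 < (\<Sum>m=1..M. P m powr \<alpha>)"
proof -
  have nonneg: "\<And>m. m \<in> {1..M} \<Longrightarrow> 0 \<le> P m" and "(\<Sum>m=1..M. P m) = 1"
    using assms by (auto simp: prob_vec_def)
  then obtain m where m: "m \<in> {1..M}" "P m \<noteq> 0"
    by (metis (mono_tags, lifting) sum.neutral zero_neq_one)
  have "0 < P m powr \<alpha>"
    using m by simp
  also have "\<dots> \<le> (\<Sum>m=1..M. P m powr \<alpha>)"
    using m by (intro member_le_sum) auto
  finally show ?thesis .
qed

lemma renyi_div_uniform:
  assumes "prob_vec M P" "0 < \<alpha>" "\<alpha> \<noteq> 1"
  shows "renyi_div \<alpha> M P (uniform M) = 1 / (\<alpha> - 1) * ln (\<Sum>m=1..M. P m powr \<alpha>) + ln M"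
proof -
  let ?S = "\<Sum>m=1..M. P m powr \<alpha>"
  have "0 < ?S"
    using prob_vec_sum_powr_pos assms by blast
  then have "0 < M"
    by (cases M) auto
  have "(\<Sum>m=1..M. P m powr \<alpha> * uniform M m powr (1 - \<alpha>)) = ?S * (1 / M) powr (1 - \<alpha>)"
    by (simp add: uniform_def sum_distrib_right)
  moreover have "ln (?S * (1 / M) powr (1 - \<alpha>)) = ln ?S + (\<alpha> - 1) * ln M"
    using \<open>0 < ?S\<close> \<open>0 < M\<close> by (simp add: ln_mult ln_powr ln_div algebra_simps)
  ultimately show ?thesis
    using assms by (simp add: renyi_div_def field_simps)
qed

lemma renyi_div_1_uniform:
  assumes "prob_vec M P"
  shows "renyi_div_1 M P (uniform M) = (\<Sum>m=1..M. P m * ln (P m)) + ln M"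
proof -
  have nonneg: "\<And>m. m \<in> {1..M} \<Longrightarrow> 0 \<le> P m" and total: "(\<Sum>m=1..M. P m) = 1"
    using assms by (auto simp: prob_vec_def)
  have "P m * ln (P m / uniform M m) = P m * ln (P m) + P m * ln M" if "m \<in> {1..M}" for m
    using nonneg[OF that] that by (cases "P m = 0") (auto simp: uniform_def ln_mult algebra_simps)
  then have "renyi_div_1 M P (uniform M) = (\<Sum>m=1..M. P m * ln (P m) + P m * ln M)"
    unfolding renyi_div_1_def by (rule sum.cong[OF refl])
  also have "\<dots> = (\<Sum>m=1..M. P m * ln (P m)) + ln M"
    using total by (simp add: sum.distrib flip: sum_distrib_right)
  finally show ?thesis .
qed

lemma renyi_div_inf_uniform:
  assumes "0 < M"
  shows "renyi_div_inf M P (uniform M) = ln (M * Max (P ` {1..M}))"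
proof -
  have "Max ((\<lambda>m. P m / uniform M m) ` {1..M}) = Max ((\<lambda>y. M * y) ` P ` {1..M})"
    by (simp add: uniform_def image_image mult.commute)
  also have "\<dots> = M * Max (P ` {1..M})"
    using assms by (intro mono_Max_commute[symmetric]) (auto intro: monoI)
  finally show ?thesis
    by (simp add: renyi_div_inf_def)
qed

lemma is_minimum_renyi_div:
  assumes "0 < N" "N < M" "0 \<le> a" "a \<le> 1" "0 < \<alpha>" "\<alpha> \<noteq> 1"
  shows "is_minimum ((\<lambda>P. renyi_div \<alpha> M P (uniform M)) ` head_mass_vecs M N a)
    (1 / (\<alpha> - 1) * ln (N * (a / N) powr \<alpha> + (real M - real N) * ((1 - a) / (real M - real N)) powr \<alpha>)
      + ln M)"
proof (cases "1 < \<alpha>")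
  case True
  have "is_minimum ((\<lambda>P. \<Sum>m=1..M. P m powr \<alpha>) ` head_mass_vecs M N a)
      (N * (a / N) powr \<alpha> + (real M - real N) * ((1 - a) / (real M - real N)) powr \<alpha>)"
    using powr_ge_tangent[OF True] assms
    by (intro is_minimum_sum_block_uniform exI[of _ "\<alpha> * _ powr (\<alpha> - 1)"] allI impI)
  then show ?thesis
  proof (rule is_minimum_image_mono[where h = "\<lambda>t. 1 / (\<alpha> - 1) * ln t + ln M"])
    fix P Q assume P: "P \<in> head_mass_vecs M N a"
      and le: "(\<Sum>m=1..M. P m powr \<alpha>) \<le> (\<Sum>m=1..M. Q m powr \<alpha>)"
    have "0 < (\<Sum>m=1..M. P m powr \<alpha>)"
      using P assms prob_vec_sum_powr_pos by (auto simp: head_mass_vecs_def)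
    with le have "ln (\<Sum>m=1..M. P m powr \<alpha>) \<le> ln (\<Sum>m=1..M. Q m powr \<alpha>)"
      by simp
    with True show "1 / (\<alpha> - 1) * ln (\<Sum>m=1..M. P m powr \<alpha>) + ln M
        \<le> 1 / (\<alpha> - 1) * ln (\<Sum>m=1..M. Q m powr \<alpha>) + ln M"
      by (simp add: divide_right_mono)
  qed (use renyi_div_uniform assms in \<open>auto simp: head_mass_vecs_def\<close>)
next
  case False
  then have "\<alpha> < 1"
    using assms by simp
  define f where "f y = - (y powr \<alpha>)" for y :: real
  have "\<exists>g. \<forall>y\<ge>0. f c + g * (y - c) \<le> f y" if "0 < c" for c
    using powr_le_tangent[OF assms(5) \<open>\<alpha> < 1\<close> that]
    by (intro exI[of _ "- (\<alpha> * c powr (\<alpha> - 1))"]) (auto simp: f_def algebra_simps)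
  then have "is_minimum ((\<lambda>P. \<Sum>m=1..M. f (P m)) ` head_mass_vecs M N a)
      (N * f (a / N) + (real M - real N) * f ((1 - a) / (real M - real N)))"
    using assms by (intro is_minimum_sum_block_uniform) auto
  then have "is_minimum ((\<lambda>P. renyi_div \<alpha> M P (uniform M)) ` head_mass_vecs M N a)
      (1 / (\<alpha> - 1) * ln (- (N * f (a / N) + (real M - real N) * f ((1 - a) / (real M - real N))))
        + ln M)"
  proof (rule is_minimum_image_mono[where h = "\<lambda>t. 1 / (\<alpha> - 1) * ln (- t) + ln M"])
    fix P Q assume "P \<in> head_mass_vecs M N a" "Q \<in> head_mass_vecs M N a"
      and "(\<Sum>m=1..M. f (P m)) \<le> (\<Sum>m=1..M. f (Q m))"
    then have "0 < (\<Sum>m=1..M. Q m powr \<alpha>)"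
      and "(\<Sum>m=1..M. Q m powr \<alpha>) \<le> (\<Sum>m=1..M. P m powr \<alpha>)"
      using assms prob_vec_sum_powr_pos by (auto simp: head_mass_vecs_def f_def sum_negf)
    then have "ln (\<Sum>m=1..M. Q m powr \<alpha>) \<le> ln (\<Sum>m=1..M. P m powr \<alpha>)"
      by simp
    then show "1 / (\<alpha> - 1) * ln (- (\<Sum>m=1..M. f (P m))) + ln M
        \<le> 1 / (\<alpha> - 1) * ln (- (\<Sum>m=1..M. f (Q m))) + ln M"
      using \<open>\<alpha> < 1\<close> by (simp add: f_def sum_negf divide_right_mono_neg)
  qed (use renyi_div_uniform assms in \<open>auto simp: head_mass_vecs_def f_def sum_negf\<close>)
  then show ?thesis
    by (simp add: f_def ac_simps)
qed

lemma is_minimum_renyi_div_1: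
  assumes "0 < N" "N < M" "0 \<le> a" "a \<le> 1"
  shows "is_minimum ((\<lambda>P. renyi_div_1 M P (uniform M)) ` head_mass_vecs M N a)
    (a * ln (a / N) + (1 - a) * ln ((1 - a) / (real M - real N)) + ln M)"
proof -
  have "is_minimum ((\<lambda>P. \<Sum>m=1..M. P m * ln (P m)) ` head_mass_vecs M N a)
      (N * (a / N * ln (a / N))
        + (real M - real N) * ((1 - a) / (real M - real N) * ln ((1 - a) / (real M - real N))))"
    using xlnx_ge_tangent assms
    by (intro is_minimum_sum_block_uniform exI[of _ "ln _ + 1"] allI impI)
  then have "is_minimum ((\<lambda>P. renyi_div_1 M P (uniform M)) ` head_mass_vecs M N a)
      (N * (a / N * ln (a / N))
        + (real M - real N) * ((1 - a) / (real M - real N) * ln ((1 - a) / (real M - real N))) + ln M)"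
    by (rule is_minimum_image_mono[where h = "\<lambda>t. t + ln M"])
      (auto simp: head_mass_vecs_def renyi_div_1_uniform)
  then show ?thesis
    using assms by simp
qed

lemma head_mean_le_Max:
  assumes "P \<in> head_mass_vecs M N a" "0 < N" "N \<le> M"
  shows "a / N \<le> Max (P ` {1..M})"
proof -
  have "a = (\<Sum>m=1..N. P m)"
    using assms by (simp add: head_mass_vecs_def)
  also have "\<dots> \<le> (\<Sum>m=1..N. Max (P ` {1..M}))"
    using assms by (intro sum_mono Max_ge) auto
  finally show ?thesis
    using assms by (simp add: field_simps)
qed

lemma Max_block_uniform:
  assumes "0 < N" "N < M" "N / M \<le> a"
  shows "Max (block_uniform M N a ` {1..M}) = a / N"
proof (rule Max_eqI)
  have "(1 - a) / (real M - real N) \<le> a / N"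
    using assms by (simp add: field_simps)
  then show "y \<le> a / N" if "y \<in> block_uniform M N a ` {1..M}" for y
    using that by (auto simp: block_uniform_def)
  show "a / N \<in> block_uniform M N a ` {1..M}"
    using assms by (intro rev_image_eqI[of 1]) (auto simp: block_uniform_def)
qed simp

lemma is_minimum_renyi_div_inf:
  assumes "0 < N" "N < M" "N / M \<le> a" "a \<le> 1"
  shows "is_minimum ((\<lambda>P. renyi_div_inf M P (uniform M)) ` head_mass_vecs M N a)
    (ln (a / N) + ln M)"
proof -
  have "0 < real N / real M"
    using assms by simp
  then have "0 < a"
    using assms(3) by linarith
  have "block_uniform M N a \<in> head_mass_vecs M N a"
    using assms \<open>0 < a\<close> by (intro block_uniform_in_head_mass_vecs) auto
  then have "is_minimum ((\<lambda>P. Max (P ` {1..M})) ` head_mass_vecs M N a) (a / N)"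
    using Max_block_uniform[OF assms(1-3)] head_mean_le_Max assms
    unfolding is_minimum_def by (auto intro: rev_image_eqI[of "block_uniform M N a"])
  then have "is_minimum ((\<lambda>P. renyi_div_inf M P (uniform M)) ` head_mass_vecs M N a) (ln (M * (a / N)))"
  proof (rule is_minimum_image_mono[where h = "\<lambda>t. ln (M * t)"])
    fix P Q assume P: "P \<in> head_mass_vecs M N a" and le: "Max (P ` {1..M}) \<le> Max (Q ` {1..M})"
    have "0 < a / N"
      using assms \<open>0 < a\<close> by simp
    also have "\<dots> \<le> Max (P ` {1..M})"
      using head_mean_le_Max[OF P] assms by simp
    finally have "0 < Max (P ` {1..M})" .
    with le assms show "ln (M * Max (P ` {1..M})) \<le> ln (M * Max (Q ` {1..M}))"
      by (simp del: Max_less_iff Max_le_iff Max_ge_iff Max_gr_iff)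
  qed (use renyi_div_inf_uniform assms in simp)
  moreover have "ln (M * (a / N)) = ln (a / N) + ln M"
    using ln_mult[of "real M" "a / N"] assms \<open>0 < a\<close> by simp
  ultimately show ?thesis
    by simp
qed

lemma sum_dcost:
  assumes "N \<le> M"
  shows "(\<Sum>m=1..M. P m * dcost N m) = N * (\<Sum>m=1..M. P m) - (\<Sum>m=1..N. P m)"
proof -
  have "(\<Sum>m=1..N. P m * dcost N m) = (real N - 1) * (\<Sum>m=1..N. P m)"
    by (simp add: dcost_def sum_distrib_left mult.commute)
  moreover have "(\<Sum>m=Suc N..M. P m * dcost N m) = N * (\<Sum>m=Suc N..M. P m)"
    by (simp add: dcost_def sum_distrib_left mult.commute)
  ultimately show ?thesis
    using sum_atLeastAtMost_split_head[OF assms, of P]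
      sum_atLeastAtMost_split_head[OF assms, of "\<lambda>m. P m * dcost N m"]
    by (simp add: algebra_simps)
qed

lemma feasible_eq_head_mass_vecs:
  assumes "2 \<le> N" "N \<le> N ^ K"
  shows "feasible N K D = head_mass_vecs (N ^ K) N (1 - (real N - 1) * (D - 1))"
proof -
  have "1 / (real N - 1) * (\<Sum>m=1..N^K. P m * dcost N m) = D
      \<longleftrightarrow> (\<Sum>m=1..N. P m) = 1 - (real N - 1) * (D - 1)" if "prob_vec (N ^ K) P" for P
    using that assms sum_dcost[OF assms(2), of P]
    by (auto simp: prob_vec_def field_simps)
  then show ?thesis
    unfolding feasible_def head_mass_vecs_def by blast
qed

lemma diff_one_mult_sum_inverse_powers:
  fixes x :: real
  assumes "x \<noteq> 0"
  shows "(x - 1) * (\<Sum>k<K. 1 / x ^ k) = x - x / x ^ K"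
proof (induction K)
  case (Suc K)
  then show ?case
    using assms by (simp add: field_simps)
qed simp

theorem theorem1:
  fixes N K :: nat and D :: real
  assumes "N \<ge> 2" and "K \<ge> 2"
    and "1 \<le> D"
    and "D \<le> 1 / (1 / (\<Sum>k<K. 1 / real N ^ k))"
  shows
    "(\<forall>\<alpha>::real. 0 < \<alpha> \<and> \<alpha> \<noteq> 1 \<longrightarrow>
        is_minimum ((\<lambda>P. renyi_div \<alpha> (N^K) P (uniform (N^K))) ` feasible N K D)
          (1 / (\<alpha> - 1) * ln (real N * ((1 - (real N - 1) * (D - 1)) / real N) powr \<alpha>
              + (real N ^ K - real N) * (((real N - 1) * (D - 1)) / (real N ^ K - real N)) powr \<alpha>)
           + ln (real N ^ K)))
     \<and> is_minimum ((\<lambda>P. renyi_div_1 (N^K) P (uniform (N^K))) ` feasible N K D)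
          ((1 - (real N - 1) * (D - 1)) * ln ((1 - (real N - 1) * (D - 1)) / real N)
           + (real N - 1) * (D - 1) * ln (((real N - 1) * (D - 1)) / (real N ^ K - real N))
           + ln (real N ^ K))
     \<and> is_minimum ((\<lambda>P. renyi_div_inf (N^K) P (uniform (N^K))) ` feasible N K D)
          (ln ((1 - (real N - 1) * (D - 1)) / real N) + ln (real N ^ K))"
proof -
  define a where "a = 1 - (real N - 1) * (D - 1)"
  have "N < N ^ 2"
    using assms by (simp add: power2_eq_square)
  moreover have "N ^ 2 \<le> N ^ K"
    using assms by (intro power_increasing) auto
  ultimately have NM: "N < N ^ K"
    by linarith
  have "(real N - 1) * (D - 1) \<le> (real N - 1) * ((\<Sum>k<K. 1 / real N ^ k) - 1)"
    using assms by (intro mult_left_mono) auto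
  then have "real N / real N ^ K \<le> a"
    using diff_one_mult_sum_inverse_powers[of "real N" K] assms by (simp add: a_def algebra_simps)
  moreover from this have "0 \<le> a"
    by (rule order_trans[rotated]) simp
  moreover have "a \<le> 1"
    using assms by (simp add: a_def)
  moreover have "feasible N K D = head_mass_vecs (N ^ K) N a"
    using feasible_eq_head_mass_vecs[of N K D] NM assms by (simp add: a_def)
  moreover have "1 - a = (real N - 1) * (D - 1)"
    by (simp add: a_def)
  ultimately show ?thesis
    using is_minimum_renyi_div[of N "N ^ K" a] is_minimum_renyi_div_1[of N "N ^ K" a]
      is_minimum_renyi_div_inf[of N "N ^ K" a] NM assms
    by (simp add: a_def[symmetric])
qed

end
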